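(* Let $(C,f,P,Q)$ be a postcritically finite quadratic morphism over a field $K$ of characteristic $\ne2$. Then its postcritical orbit $\Gamma=\{f^n(P),f^n(Q)\mid n\ge1\}$, together with the map $\tau\colon\Gamma\to\Gamma$ induced by $f$ and the distinguished elements $i_1:=f(P)$ and $j_1:=f(Q)$, is a finite mapping scheme.
   Context: A quadratic morphism over a field $K$ (of characteristic $\ne2$) is a quadruple $(C,f,P,Q)$ with $C\cong\mathbb{P}^1_K$, $f\colon C\to C$ a morphism of degree $2$, and $P,Q\in C(K)$ the points whose images are precisely the critical points of $f$ (where $df=0$). The postcritical orbit is $\{f^n(P),f^n(Q)\mid n\ge1\}$, and $f$ is postcritically finite if this set is finite. A finite mapping scheme is a quadruple $(\Gamma,\tau,i_1,j_1)$ consisting of a finite set $\Gamma$, a map $\tau\colon\Gamma\to\Gamma$ and two distinct elements $i_1,j_1\in\Gamma$ such that, writing $i_n:=\tau^{n-1}(i_1)$, $j_n:=\tau^{n-1}(j_1)$ for $n\ge2$: (a) $\Gamma=\{i_n,j_n\mid n\ge1\}$; (b) $|\tau^{-1}(\gamma)|\le2$ for all $\gamma\in\Gamma$; (c) $|\tau^{-1}(i_1)|\le1$ and $|\tau^{-1}(j_1)|\le1$. *)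

theory Defs
  imports Main
begin

text \<open>The projective line P^1 over a field 'k is modelled as 'k option:
  Some t is the point [t:1], None is the point at infinity [1:0].\<close>

type_synonym 'k P1 = "'k option"

definition hom_coords :: "'k::field P1 \<Rightarrow> 'k \<times> 'k" where
  "hom_coords p = (case p of None \<Rightarrow> (1, 0) | Some t \<Rightarrow> (t, 1))"

definition proj_pt :: "'k::field \<times> 'k \<Rightarrow> 'k P1" where
  "proj_pt xy = (if snd xy = 0 then None else Some (fst xy / snd xy))"

definition bqf :: "'k::field \<Rightarrow> 'k \<Rightarrow> 'k \<Rightarrow> 'k \<times> 'k \<Rightarrow> 'k" where
  "bqf a b c xy = a * (fst xy)^2 + b * fst xy * snd xy + c * (snd xy)^2"

definition bqf_resultant :: "'k::field \<Rightarrow> 'k \<Rightarrow> 'k \<Rightarrow> 'k \<Rightarrow> 'k \<Rightarrow> 'k \<Rightarrow> 'k" where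
  "bqf_resultant a b c d e g = (a * g - c * d)^2 - (a * e - b * d) * (b * g - c * e)"

definition qmap :: "'k::field \<Rightarrow> 'k \<Rightarrow> 'k \<Rightarrow> 'k \<Rightarrow> 'k \<Rightarrow> 'k \<Rightarrow> 'k P1 \<Rightarrow> 'k P1" where
  "qmap a b c d e g p = proj_pt (bqf a b c (hom_coords p), bqf d e g (hom_coords p))"

text \<open>Jacobian determinant F_x G_y - F_y G_x of the homogeneous lift (F,G);
  a point is critical (df = 0) iff it vanishes there.\<close>
definition qjac :: "'k::field \<Rightarrow> 'k \<Rightarrow> 'k \<Rightarrow> 'k \<Rightarrow> 'k \<Rightarrow> 'k \<Rightarrow> 'k \<times> 'k \<Rightarrow> 'k" where
  "qjac a b c d e g xy =
     (let x = fst xy; y = snd xy in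
       (2*a*x + b*y) * (e*x + 2*g*y) - (b*x + 2*c*y) * (2*d*x + e*y))"

definition critical_points :: "'k::field \<Rightarrow> 'k \<Rightarrow> 'k \<Rightarrow> 'k \<Rightarrow> 'k \<Rightarrow> 'k \<Rightarrow> 'k P1 set" where
  "critical_points a b c d e g = {p. qjac a b c d e g (hom_coords p) = 0}"

text \<open>(P^1, f, P, Q) is a quadratic morphism: f has degree 2 (given by two
  binary quadratic forms with nonvanishing resultant) and P, Q are precisely
  the critical points of f.\<close>
definition quadratic_morphism :: "('k::field P1 \<Rightarrow> 'k P1) \<Rightarrow> 'k P1 \<Rightarrow> 'k P1 \<Rightarrow> bool" where
  "quadratic_morphism f P Q \<longleftrightarrow>
     (\<exists>a b c d e g. bqf_resultant a b c d e g \<noteq> 0 \<and> f = qmap a b c d e g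
        \<and> critical_points a b c d e g = {P, Q})"

definition postcritical_orbit :: "('a \<Rightarrow> 'a) \<Rightarrow> 'a \<Rightarrow> 'a \<Rightarrow> 'a set" where
  "postcritical_orbit f P Q = {(f ^^ n) P | n. n \<ge> 1} \<union> {(f ^^ n) Q | n. n \<ge> 1}"

definition postcritically_finite :: "('a \<Rightarrow> 'a) \<Rightarrow> 'a \<Rightarrow> 'a \<Rightarrow> bool" where
  "postcritically_finite f P Q \<longleftrightarrow> finite (postcritical_orbit f P Q)"

text \<open>Finite mapping scheme (\<Gamma>, \<tau>, i1, j1); \<tau> is a function whose restriction
  to \<Gamma> is the map \<Gamma> \<rightarrow> \<Gamma>; i_n = \<tau>^(n-1) i1, j_n = \<tau>^(n-1) j1.\<close>
definition finite_mapping_scheme :: "'a set \<Rightarrow> ('a \<Rightarrow> 'a) \<Rightarrow> 'a \<Rightarrow> 'a \<Rightarrow> bool" where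
  "finite_mapping_scheme \<Gamma> \<tau> i1 j1 \<longleftrightarrow>
     finite \<Gamma> \<and> (\<forall>x\<in>\<Gamma>. \<tau> x \<in> \<Gamma>) \<and> i1 \<in> \<Gamma> \<and> j1 \<in> \<Gamma> \<and> i1 \<noteq> j1 \<and>
     \<Gamma> = {(\<tau> ^^ n) i1 | n. True} \<union> {(\<tau> ^^ n) j1 | n. True} \<and>
     (\<forall>\<gamma>\<in>\<Gamma>. card {x\<in>\<Gamma>. \<tau> x = \<gamma>} \<le> 2) \<and>
     card {x\<in>\<Gamma>. \<tau> x = i1} \<le> 1 \<and>
     card {x\<in>\<Gamma>. \<tau> x = j1} \<le> 1"

end

theory Submission
  imports Defs
begin

text \<open>For w in P^1, every x with f x = f w is a zero of the binary quadratic form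
  G(w) F - F(w) G, which is nonzero because the resultant of F and G is nonzero;
  so fibers of f have at most two points. If w is critical, Euler's identity turns
  the vanishing Jacobian at w into the vanishing gradient of that form at w, so w
  is a double zero and the fiber of f w is just w: the two values f P, f Q have
  only the preimages P, Q. Finally, the critical points are the zeros of the
  Jacobian, a quadratic form of discriminant 16 times the resultant, hence P and
  Q are distinct and so are f P and f Q.\<close>

lemma hom_coords_simps [simp]: "hom_coords None = (1, 0)" "hom_coords (Some t) = (t, 1)"
  by (simp_all add: hom_coords_def)

lemma bqf_infinity [simp]: "bqf A B C (1, 0) = A"
  and bqf_affine [simp]: "bqf A B C (t, 1) = A * t^2 + B * t + C"
  by (simp_all add: bqf_def)

definition bqf_zeros :: "'k::field \<Rightarrow> 'k \<Rightarrow> 'k \<Rightarrow> 'k P1 set" where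
  "bqf_zeros A B C = {p. bqf A B C (hom_coords p) = 0}"

lemma quadratic_roots_Vieta:
  fixes A B C s t :: "'k::field"
  assumes "A \<noteq> 0" and "A * s^2 + B * s + C = 0"
  shows "A * t^2 + B * t + C = 0 \<longleftrightarrow> t = s \<or> t = - B / A - s"
proof -
  have "A * t^2 + B * t + C = (t - s) * (A * (t + s) + B)"
    using assms(2) by algebra
  moreover have "A * (t + s) + B = 0 \<longleftrightarrow> t = - B / A - s"
    using assms(1) by (auto simp: field_simps eq_neg_iff_add_eq_0)
  ultimately show ?thesis by simp
qed

lemma quadratic_second_root_eq_iff:
  fixes A B s :: "'k::field"
  assumes "A \<noteq> 0"
  shows "- B / A - s = s \<longleftrightarrow> 2 * A * s + B = 0"
  using assms by (smt (verit) diff_eq_eq eq_neg_iff_add_eq_0 mult.commute mult_2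
    nonzero_divide_eq_eq ring_class.ring_distribs(2))

lemma bqf_zeros_subset_pair:
  fixes A B C :: "'k::field"
  assumes "\<not> (A = 0 \<and> B = 0 \<and> C = 0)"
  obtains p q where "bqf_zeros A B C \<subseteq> {p, q}"
proof (cases "A = 0")
  case True
  have "t = - C / B" if "B * t + C = 0" for t
  proof -
    from that True assms have "B \<noteq> 0" by auto
    with that show ?thesis by (simp add: field_simps eq_neg_iff_add_eq_0)
  qed
  with True have "bqf_zeros A B C \<subseteq> {None, Some (- C / B)}"
    by (auto simp: bqf_zeros_def)
  then show thesis by (rule that)
next
  case False
  show thesis
  proof (cases "\<exists>s. A * s^2 + B * s + C = 0")
    case True
    then obtain s where s: "A * s^2 + B * s + C = 0" by blast
    have "p \<in> {Some s, Some (- B / A - s)}" if "p \<in> bqf_zeros A B C" for p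
      using that False quadratic_roots_Vieta[OF False s]
      by (cases p) (auto simp: bqf_zeros_def)
    then have "bqf_zeros A B C \<subseteq> {Some s, Some (- B / A - s)}" by blast
    then show thesis by (rule that)
  next
    case no_affine_zero: False
    with \<open>A \<noteq> 0\<close> have "bqf_zeros A B C = {}"
      by (auto simp: bqf_zeros_def hom_coords_def split: option.splits)
    then show thesis by (intro that[of None None]) simp
  qed
qed

lemma card_bqf_zeros_le_2:
  fixes A B C :: "'k::field"
  assumes "\<not> (A = 0 \<and> B = 0 \<and> C = 0)" and "S \<subseteq> bqf_zeros A B C"
  shows "card S \<le> 2"
proof -
  obtain p q where pq: "bqf_zeros A B C \<subseteq> {p, q}"
    using bqf_zeros_subset_pair[OF assms(1)] .
  have "card S \<le> card {p, q}"
    using assms(2) pq by (intro card_mono) auto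
  also have "\<dots> \<le> 2"
    by (simp add: card_insert_if)
  finally show ?thesis .
qed

lemma bqf_zeros_double_zero:
  fixes A B C :: "'k::field"
  assumes two: "(2::'k) \<noteq> 0" and nonzero: "\<not> (A = 0 \<and> B = 0 \<and> C = 0)"
    and grad: "2 * A * fst (hom_coords p) + B * snd (hom_coords p) = 0"
      "B * fst (hom_coords p) + 2 * C * snd (hom_coords p) = 0"
  shows "bqf_zeros A B C \<subseteq> {p}"
proof (cases p)
  case None
  with grad two have "A = 0" "B = 0" by simp_all
  with nonzero show ?thesis
    by (auto simp: bqf_zeros_def None hom_coords_def split: option.splits)
next
  case (Some s)
  with grad have grad_s: "2 * A * s + B = 0" "B * s + 2 * C = 0" by simp_all
  have "A \<noteq> 0"
  proof
    assume "A = 0"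
    with grad_s two have "C = 0" by simp
    with \<open>A = 0\<close> grad_s nonzero show False by simp
  qed
  have "2 * (A * s^2 + B * s + C) = s * (2 * A * s + B) + (B * s + 2 * C)"
    by algebra
  with grad_s have "2 * (A * s^2 + B * s + C) = 0" by simp
  with two have root_s: "A * s^2 + B * s + C = 0" by (metis mult_eq_0_iff)
  from grad_s \<open>A \<noteq> 0\<close> have "- B / A - s = s"
    using quadratic_second_root_eq_iff by blast
  with \<open>A \<noteq> 0\<close> quadratic_roots_Vieta[OF \<open>A \<noteq> 0\<close> root_s] show ?thesis
    by (auto simp: bqf_zeros_def Some hom_coords_def split: option.splits)
qed

lemma bqf_zeros_other_zero:
  fixes A B C :: "'k::field"
  assumes disc: "B^2 - 4 * A * C \<noteq> 0" and zero: "p \<in> bqf_zeros A B C"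
  obtains q where "q \<noteq> p" and "q \<in> bqf_zeros A B C"
proof (cases p)
  case None
  with zero have "A = 0" by (simp add: bqf_zeros_def)
  with disc have "B \<noteq> 0" by simp
  with \<open>A = 0\<close> have "Some (- C / B) \<in> bqf_zeros A B C"
    by (simp add: bqf_zeros_def)
  with None show thesis by (intro that) simp_all
next
  case (Some s)
  with zero have root_s: "A * s^2 + B * s + C = 0" by (simp add: bqf_zeros_def)
  show thesis
  proof (cases "A = 0")
    case True
    with Some show thesis by (intro that[of None]) (simp_all add: bqf_zeros_def)
  next
    case False
    have "B^2 - 4 * A * C = (2 * A * s + B)^2 - 4 * A * (A * s^2 + B * s + C)"
      by algebra
    with disc root_s have "2 * A * s + B \<noteq> 0" by auto
    with False have "- B / A - s \<noteq> s"
      using quadratic_second_root_eq_iff by blast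
    moreover have "Some (- B / A - s) \<in> bqf_zeros A B C"
      using quadratic_roots_Vieta[OF False root_s] by (simp add: bqf_zeros_def)
    ultimately show thesis using Some by (intro that) simp_all
  qed
qed

lemma bqf_no_common_zero:
  fixes a b c d e g :: "'k::field"
  assumes "bqf_resultant a b c d e g \<noteq> 0"
  shows "bqf a b c (hom_coords p) \<noteq> 0 \<or> bqf d e g (hom_coords p) \<noteq> 0"
proof (cases p)
  case None
  with assms show ?thesis by (auto simp: bqf_resultant_def)
next
  case (Some t)
  have "bqf_resultant a b c d e g = 0"
    if "a * t^2 + b * t + c = 0" "d * t^2 + e * t + g = 0"
    using that unfolding bqf_resultant_def by algebra
  with assms Some show ?thesis by auto
qed

lemma bqf_pencil_nonzero:
  fixes a b c d e g F G :: "'k::field"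
  assumes "bqf_resultant a b c d e g \<noteq> 0" and "F \<noteq> 0 \<or> G \<noteq> 0"
  shows "\<not> (a * G - d * F = 0 \<and> b * G - e * F = 0 \<and> c * G - g * F = 0)"
proof
  assume "a * G - d * F = 0 \<and> b * G - e * F = 0 \<and> c * G - g * F = 0"
  then have "bqf_resultant a b c d e g * G^2 = 0" "bqf_resultant a b c d e g * F^2 = 0"
    unfolding bqf_resultant_def by algebra+
  with assms show False by simp
qed

lemma bqf_pencil:
  "bqf (a * G - d * F) (b * G - e * F) (c * G - g * F) X = G * bqf a b c X - F * bqf d e g X"
  unfolding bqf_def by algebra

lemma proj_pt_eq_imp_cross_eq:
  fixes x y x' y' :: "'k::field"
  assumes "proj_pt (x, y) = proj_pt (x', y')"
  shows "x * y' = x' * y"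
  using assms by (cases "y = 0"; cases "y' = 0") (auto simp: proj_pt_def field_simps)

lemma qmap_fiber_subset_bqf_zeros:
  fixes a b c d e g :: "'k::field"
  assumes "F = bqf a b c (hom_coords w)" and "G = bqf d e g (hom_coords w)"
  shows "{x. qmap a b c d e g x = qmap a b c d e g w}
    \<subseteq> bqf_zeros (a * G - d * F) (b * G - e * F) (c * G - g * F)"
proof
  fix x
  assume "x \<in> {x. qmap a b c d e g x = qmap a b c d e g w}"
  then have "bqf a b c (hom_coords x) * G = F * bqf d e g (hom_coords x)"
    unfolding assms qmap_def by (auto dest: proj_pt_eq_imp_cross_eq)
  then have "G * bqf a b c (hom_coords x) - F * bqf d e g (hom_coords x) = 0"
    by (simp add: mult.commute)
  then show "x \<in> bqf_zeros (a * G - d * F) (b * G - e * F) (c * G - g * F)"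
    by (simp add: bqf_zeros_def bqf_pencil)
qed

lemma card_qmap_fiber_le_2:
  fixes a b c d e g :: "'k::field"
  assumes res: "bqf_resultant a b c d e g \<noteq> 0"
  shows "card {x \<in> S. qmap a b c d e g x = z} \<le> 2"
proof (cases "z \<in> range (qmap a b c d e g)")
  case True
  then obtain w where w: "z = qmap a b c d e g w" by blast
  define F G where "F = bqf a b c (hom_coords w)" and "G = bqf d e g (hom_coords w)"
  show ?thesis
  proof (rule card_bqf_zeros_le_2)
    show "\<not> (a * G - d * F = 0 \<and> b * G - e * F = 0 \<and> c * G - g * F = 0)"
      using bqf_pencil_nonzero[OF res] bqf_no_common_zero[OF res] unfolding F_def G_def by blast
    show "{x \<in> S. qmap a b c d e g x = z}
      \<subseteq> bqf_zeros (a * G - d * F) (b * G - e * F) (c * G - g * F)"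
      using qmap_fiber_subset_bqf_zeros[OF F_def G_def] w by blast
  qed
next
  case False
  then have empty: "{x \<in> S. qmap a b c d e g x = z} = {}" by auto
  show ?thesis by (subst empty) simp
qed

lemma qmap_fiber_of_critical_point:
  fixes a b c d e g :: "'k::field"
  assumes two: "(2::'k) \<noteq> 0" and res: "bqf_resultant a b c d e g \<noteq> 0"
    and crit: "w \<in> critical_points a b c d e g"
  shows "{x. qmap a b c d e g x = qmap a b c d e g w} \<subseteq> {w}"
proof -
  define F G where "F = bqf a b c (hom_coords w)" and "G = bqf d e g (hom_coords w)"
  obtain x0 y0 where w: "hom_coords w = (x0, y0)" by fastforce
  have FG: "F = a * x0^2 + b * x0 * y0 + c * y0^2" "G = d * x0^2 + e * x0 * y0 + g * y0^2"
    unfolding F_def G_def w bqf_def by simp_all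
  from crit have jac: "(2*a*x0 + b*y0) * (e*x0 + 2*g*y0) - (b*x0 + 2*c*y0) * (2*d*x0 + e*y0) = 0"
    by (simp add: critical_points_def qjac_def w)
  have "2 * (2 * (a * G - d * F) * x0 + (b * G - e * F) * y0) = 0"
    using jac unfolding FG by algebra
  with two have grad_x: "2 * (a * G - d * F) * x0 + (b * G - e * F) * y0 = 0"
    by (metis mult_eq_0_iff)
  have "2 * ((b * G - e * F) * x0 + 2 * (c * G - g * F) * y0) = 0"
    using jac unfolding FG by algebra
  with two have grad_y: "(b * G - e * F) * x0 + 2 * (c * G - g * F) * y0 = 0"
    by (metis mult_eq_0_iff)
  have "\<not> (a * G - d * F = 0 \<and> b * G - e * F = 0 \<and> c * G - g * F = 0)"
    using bqf_pencil_nonzero[OF res] bqf_no_common_zero[OF res] unfolding F_def G_def by blast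
  then have "bqf_zeros (a * G - d * F) (b * G - e * F) (c * G - g * F) \<subseteq> {w}"
    by (rule bqf_zeros_double_zero[OF two]) (use grad_x grad_y in \<open>simp_all only: w prod.sel\<close>)
  with qmap_fiber_subset_bqf_zeros[OF F_def G_def] show ?thesis by blast
qed

lemma critical_points_eq_bqf_zeros:
  "critical_points a b c d e g = bqf_zeros (2 * (a*e - b*d)) (4 * (a*g - c*d)) (2 * (b*g - c*e))"
proof -
  have "qjac a b c d e g xy = bqf (2 * (a*e - b*d)) (4 * (a*g - c*d)) (2 * (b*g - c*e)) xy" for xy
    unfolding qjac_def bqf_def Let_def by algebra
  then show ?thesis by (simp add: critical_points_def bqf_zeros_def)
qed

lemma critical_points_distinct:
  fixes a b c d e g :: "'k::field"
  assumes two: "(2::'k) \<noteq> 0" and res: "bqf_resultant a b c d e g \<noteq> 0"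
    and crit: "critical_points a b c d e g = {P, Q}"
  shows "P \<noteq> Q"
proof
  assume "P = Q"
  have "(4 * (a*g - c*d))^2 - 4 * (2 * (a*e - b*d)) * (2 * (b*g - c*e))
      = (2 * 2 * 2 * 2) * bqf_resultant a b c d e g"
    unfolding bqf_resultant_def by algebra
  with two res have disc: "(4 * (a*g - c*d))^2 - 4 * (2 * (a*e - b*d)) * (2 * (b*g - c*e)) \<noteq> 0"
    by (metis mult_eq_0_iff)
  have "P \<in> critical_points a b c d e g" using crit by simp
  then obtain q where "q \<noteq> P" "q \<in> critical_points a b c d e g"
    unfolding critical_points_eq_bqf_zeros using bqf_zeros_other_zero[OF disc] by blast
  with crit \<open>P = Q\<close> show False by simp
qed

lemma funpow_orbit_shift: "{(f ^^ n) x | n. n \<ge> 1} = {(f ^^ n) (f x) | n. True}"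
proof -
  have "{(f ^^ n) x | n. n \<ge> 1} = {(f ^^ Suc n) x | n. True}"
    by (auto simp: Suc_le_eq simp del: funpow.simps dest!: gr0_implies_Suc)
  then show ?thesis by (simp add: funpow_Suc_right del: funpow.simps)
qed

lemma postcritical_orbit_eq:
  "postcritical_orbit f P Q = {(f ^^ n) (f P) | n. True} \<union> {(f ^^ n) (f Q) | n. True}"
  unfolding postcritical_orbit_def funpow_orbit_shift ..

lemma postcritical_orbit_closed:
  assumes "x \<in> postcritical_orbit f P Q"
  shows "f x \<in> postcritical_orbit f P Q"
proof -
  from assms obtain n R where "x = (f ^^ n) (f R)" "R = P \<or> R = Q"
    unfolding postcritical_orbit_eq by blast
  then have "f x = (f ^^ Suc n) (f R)" "R = P \<or> R = Q" by simp_all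
  then show ?thesis unfolding postcritical_orbit_eq by blast
qed

theorem proposition2p2:
  fixes f :: "'k::field P1 \<Rightarrow> 'k P1" and P Q :: "'k P1"
  assumes "(2::'k) \<noteq> 0"
    and "quadratic_morphism f P Q"
    and "postcritically_finite f P Q"
  shows "finite_mapping_scheme (postcritical_orbit f P Q) f (f P) (f Q)"
proof -
  obtain a b c d e g where res: "bqf_resultant a b c d e g \<noteq> 0" and f: "f = qmap a b c d e g"
    and crit: "critical_points a b c d e g = {P, Q}"
    using assms(2) unfolding quadratic_morphism_def by blast
  let ?\<Gamma> = "postcritical_orbit f P Q"
  have fiber_crit: "{x. f x = f R} \<subseteq> {R}" if "R \<in> {P, Q}" for R
    using qmap_fiber_of_critical_point[OF assms(1) res] that crit f by blast
  have card_fiber_crit: "card {x \<in> ?\<Gamma>. f x = f R} \<le> 1" if "R \<in> {P, Q}" for R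
  proof -
    have "card {x \<in> ?\<Gamma>. f x = f R} \<le> card {R}"
      using fiber_crit[OF that] by (intro card_mono) auto
    then show ?thesis by simp
  qed
  have "P \<noteq> Q" using critical_points_distinct[OF assms(1) res crit] .
  with fiber_crit have "f P \<noteq> f Q" by blast
  moreover have "finite ?\<Gamma>" using assms(3) unfolding postcritically_finite_def .
  moreover have "f P \<in> ?\<Gamma>" "f Q \<in> ?\<Gamma>"
    unfolding postcritical_orbit_eq by (auto intro: exI[of _ 0])
  moreover have "card {x \<in> ?\<Gamma>. f x = \<gamma>} \<le> 2" for \<gamma>
    unfolding f by (rule card_qmap_fiber_le_2[OF res])
  ultimately show ?thesis
    unfolding finite_mapping_scheme_def
    by (intro conjI ballI postcritical_orbit_eq card_fiber_crit)
      (simp_all add: postcritical_orbit_closed)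
qed

end
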